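(* Let $\overrightarrow{W}$ be a Morse sequence on a simplicial complex $K$, with reference map $\curlywedge$ and coreference map $\curlyvee$. Let $\kappa$ be a critical simplex of $\overrightarrow{W}$ and $\nu\in K$. Then (1) $\kappa\in\curlywedge(\nu)$ if and only if the number of gradient paths in $\overrightarrow{W}$ from $\nu$ to $\kappa$ is odd; (2) $\kappa\in\curlyvee(\nu)$ if and only if the number of cogradient paths in $\overrightarrow{W}$ from $\kappa$ to $\nu$ is odd.
   Context: A simplicial complex $K$ is a finite collection of non-empty finite sets closed under taking non-empty subsets; members are simplices, $\dim\sigma=|\sigma|-1$, $K^{(p)}$ is the set of $p$-simplices, a facet is a maximal simplex. A pair $(\sigma,\tau)$ with $\sigma\subsetneq\tau$ is a free pair for $K$ if $\tau$ is the only simplex of $K$ other than $\sigma$ containing $\sigma$; then $K$ is an elementary expansion of $K\setminus\{\sigma,\tau\}$. If $\nu$ is a facet of $K$, $K$ is an elementary filling of $K\setminus\{\nu\}$. A Morse sequence on $K$ is a sequence $\langle\emptyset=K_0,\dots,K_k=K\rangle$ with each $K_i$ an elementary expansion or elementary filling of $K_{i-1}$. A simplex added by a filling is critical; if $K_i=K_{i-1}\cup\{\sigma,\tau\}$ is an expansion with $\sigma\subset\tau$, $(\sigma,\tau)$ is a regular pair, $\sigma$ is lower regular and $\tau$ upper regular. Chains mod 2: $K[p]$ is the $\mathbb{Z}_2$-vector space of subsets of $K^{(p)}$ (sum = symmetric difference, empty chain $=0$). For $\sigma\in K^{(p)}$, $\partial(\sigma)=\{\tau\in K^{(p-1)}:\tau\subset\sigma\}$,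 $\delta(\sigma)=\{\tau\in K^{(p+1)}:\sigma\subset\tau\}$. The reference map $\curlywedge$ is the unique map assigning to each $p$-simplex $\nu$ a set $\curlywedge(\nu)$ of critical $p$-simplices, extended linearly to chains ($\curlywedge(c)=\sum_{\nu\in c}\curlywedge(\nu)$ mod 2), such that $\curlywedge(\nu)=\{\nu\}$ for critical $\nu$, and $\curlywedge(\tau)=0$, $\curlywedge(\partial(\tau))=0$ for every upper regular $\tau$. The coreference map $\curlyvee$ is the unique such map with $\curlyvee(\nu)=\{\nu\}$ for critical $\nu$ and $\curlyvee(\sigma)=0$, $\curlyvee(\delta(\sigma))=0$ for every lower regular $\sigma$. A gradient path in $\overrightarrow{W}$ from $\sigma_0$ to $\sigma_k$ is a sequence $\langle\sigma_0,\tau_0,\dots,\sigma_{k-1},\tau_{k-1},\sigma_k\rangle$, $k\ge0$, with $\sigma_i\in K^{(p)}$, $\tau_i\in K^{(p+1)}$, such that for each $i\in[0,k-1]$, $(\sigma_i,\tau_i)$ is a regular pair and $\sigma_{i+1}\in\partial(\tau_i)$ with $\sigma_{i+1}\neq\sigma_i$. A cogradient path from $\tau_0$ to $\tau_k$ is a sequence $\langle\tau_0,\sigma_1,\tau_1,\dots,\sigma_k,\tau_k\rangle$, $k\ge0$, with $\tau_i\in K^{(p)}$, $\sigma_i\in K^{(p-1)}$, such that for each $i\in[1,k]$, $(\sigma_i,\tau_i)$ is a regular pair and $\tau_{i-1}\in\delta(\sigma_i)$ with $\tau_i\neq\tau_{i-1}$. (Paths with $k=0$ are trivial paths $\langle\sigma_0\rangle$.)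 *)

theory Defs
  imports Main
begin

text \<open>Simplices are finite non-empty sets of vertices; a complex is a set of simplices.
  dim sigma = card sigma - 1, so "sigma is a p-simplex" is "card sigma = p + 1".\<close>

definition simplicial_complex :: "'a set set \<Rightarrow> bool" where
  "simplicial_complex K \<longleftrightarrow> finite K \<and> (\<forall>\<sigma>\<in>K. finite \<sigma> \<and> \<sigma> \<noteq> {}) \<and>
     (\<forall>\<sigma>\<in>K. \<forall>\<tau>. \<tau> \<noteq> {} \<and> \<tau> \<subseteq> \<sigma> \<longrightarrow> \<tau> \<in> K)"

definition free_pair :: "'a set set \<Rightarrow> 'a set \<Rightarrow> 'a set \<Rightarrow> bool" where
  "free_pair K \<sigma> \<tau> \<longleftrightarrow> \<sigma> \<subset> \<tau> \<and> \<sigma> \<in> K \<and> \<tau> \<in> K \<and>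
     (\<forall>\<rho>\<in>K. \<sigma> \<subseteq> \<rho> \<and> \<rho> \<noteq> \<sigma> \<longrightarrow> \<rho> = \<tau>)"

definition facet :: "'a set set \<Rightarrow> 'a set \<Rightarrow> bool" where
  "facet K \<nu> \<longleftrightarrow> \<nu> \<in> K \<and> (\<forall>\<rho>\<in>K. \<nu> \<subseteq> \<rho> \<longrightarrow> \<rho> = \<nu>)"

text \<open>A step of a Morse sequence: an elementary filling adding a critical simplex,
  or an elementary expansion adding a regular pair (sigma, tau).\<close>
datatype 'a step = Fill "'a set" | Expand "'a set" "'a set"

fun added :: "'a step \<Rightarrow> 'a set set" where
  "added (Fill \<nu>) = {\<nu>}"
| "added (Expand \<sigma> \<tau>) = {\<sigma>, \<tau>}"

definition stage :: "'a step list \<Rightarrow> nat \<Rightarrow> 'a set set" where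
  "stage W i = (\<Union>s\<in>set (take i W). added s)"

fun valid_step :: "'a set set \<Rightarrow> 'a set set \<Rightarrow> 'a step \<Rightarrow> bool" where
  "valid_step Kprev Knew (Fill \<nu>) \<longleftrightarrow>
     simplicial_complex Knew \<and> facet Knew \<nu> \<and> Kprev = Knew - {\<nu>}"
| "valid_step Kprev Knew (Expand \<sigma> \<tau>) \<longleftrightarrow>
     simplicial_complex Knew \<and> free_pair Knew \<sigma> \<tau> \<and> Kprev = Knew - {\<sigma>, \<tau>}"

definition morse_sequence_on :: "'a step list \<Rightarrow> 'a set set \<Rightarrow> bool" where
  "morse_sequence_on W K \<longleftrightarrow> stage W (length W) = K \<and>
     (\<forall>i < length W. valid_step (stage W i) (stage W (Suc i)) (W ! i))"

definition critical :: "'a step list \<Rightarrow> 'a set set" where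
  "critical W = {\<nu>. Fill \<nu> \<in> set W}"

definition regular_pair :: "'a step list \<Rightarrow> 'a set \<Rightarrow> 'a set \<Rightarrow> bool" where
  "regular_pair W \<sigma> \<tau> \<longleftrightarrow> Expand \<sigma> \<tau> \<in> set W"

definition lower_regular :: "'a step list \<Rightarrow> 'a set set" where
  "lower_regular W = {\<sigma>. \<exists>\<tau>. regular_pair W \<sigma> \<tau>}"

definition upper_regular :: "'a step list \<Rightarrow> 'a set set" where
  "upper_regular W = {\<tau>. \<exists>\<sigma>. regular_pair W \<sigma> \<tau>}"

text \<open>Boundary and coboundary (as Z_2 chains = sets of simplices of K).\<close>
definition bd :: "'a set set \<Rightarrow> 'a set \<Rightarrow> 'a set set" where
  "bd K \<sigma> = {\<tau> \<in> K. \<tau> \<subseteq> \<sigma> \<and> card \<tau> + 1 = card \<sigma>}"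

definition cobd :: "'a set set \<Rightarrow> 'a set \<Rightarrow> 'a set set" where
  "cobd K \<sigma> = {\<tau> \<in> K. \<sigma> \<subseteq> \<tau> \<and> card \<tau> = card \<sigma> + 1}"

text \<open>Linear (mod 2) extension of a map on simplices to chains.\<close>
definition lin :: "('a set \<Rightarrow> 'a set set) \<Rightarrow> 'a set set \<Rightarrow> 'a set set" where
  "lin f c = {\<kappa>. odd (card {\<nu> \<in> c. \<kappa> \<in> f \<nu>})}"

definition is_reference_map :: "'a step list \<Rightarrow> 'a set set \<Rightarrow> ('a set \<Rightarrow> 'a set set) \<Rightarrow> bool" where
  "is_reference_map W K f \<longleftrightarrow>
     (\<forall>\<nu>\<in>K. f \<nu> \<subseteq> {\<kappa> \<in> critical W. card \<kappa> = card \<nu>}) \<and>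
     (\<forall>\<nu>\<in>critical W. f \<nu> = {\<nu>}) \<and>
     (\<forall>\<tau>\<in>upper_regular W. f \<tau> = {} \<and> lin f (bd K \<tau>) = {})"

definition is_coreference_map :: "'a step list \<Rightarrow> 'a set set \<Rightarrow> ('a set \<Rightarrow> 'a set set) \<Rightarrow> bool" where
  "is_coreference_map W K f \<longleftrightarrow>
     (\<forall>\<nu>\<in>K. f \<nu> \<subseteq> {\<kappa> \<in> critical W. card \<kappa> = card \<nu>}) \<and>
     (\<forall>\<nu>\<in>critical W. f \<nu> = {\<nu>}) \<and>
     (\<forall>\<sigma>\<in>lower_regular W. f \<sigma> = {} \<and> lin f (cobd K \<sigma>) = {})"

text \<open>Gradient paths <s_0, t_0, ..., s_(k-1), t_(k-1), s_k> from a to b,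
  encoded as the pair of lists ([s_0..s_k], [t_0..t_(k-1)]).\<close>
definition gradient_paths :: "'a step list \<Rightarrow> 'a set set \<Rightarrow> 'a set \<Rightarrow> 'a set \<Rightarrow> ('a set list \<times> 'a set list) set" where
  "gradient_paths W K a b = {(ss, ts). \<exists>p::nat.
     length ss = length ts + 1 \<and> ss ! 0 = a \<and> ss ! length ts = b \<and>
     (\<forall>i \<le> length ts. ss ! i \<in> K \<and> card (ss ! i) = p + 1) \<and>
     (\<forall>i < length ts. ts ! i \<in> K \<and> card (ts ! i) = p + 2 \<and>
        regular_pair W (ss ! i) (ts ! i) \<and> ss ! Suc i \<in> bd K (ts ! i) \<and> ss ! Suc i \<noteq> ss ! i)}"

text \<open>Cogradient paths <t_0, s_1, t_1, ..., s_k, t_k> from a to b,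
  encoded as the pair of lists ([t_0..t_k], [s_1..s_k]).\<close>
definition cogradient_paths :: "'a step list \<Rightarrow> 'a set set \<Rightarrow> 'a set \<Rightarrow> 'a set \<Rightarrow> ('a set list \<times> 'a set list) set" where
  "cogradient_paths W K a b = {(ts, ss). \<exists>p::nat.
     length ts = length ss + 1 \<and> ts ! 0 = a \<and> ts ! length ss = b \<and>
     (\<forall>i \<le> length ss. ts ! i \<in> K \<and> card (ts ! i) = p + 1) \<and>
     (\<forall>i < length ss. ss ! i \<in> K \<and> card (ss ! i) + 1 = p + 1 \<and>
        regular_pair W (ss ! i) (ts ! Suc i) \<and> ts ! i \<in> cobd K (ss ! i) \<and> ts ! Suc i \<noteq> ts ! i)}"

end

theory Submission
  imports Defs
begin

(* Unwinding a gradient path from a lower regular simplex a by its first step (a, t) puts the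
   paths from a to kappa in bijection with the disjoint union, over the faces s /= a of t, of
   the paths from s to kappa; from a simplex that is not lower regular only the trivial path
   exists, and only when a = kappa. The reference map obeys the same recursion modulo 2:
   ref(bd t) = 0 gives ref(a) = sum of ref(s) over these faces s, while ref(a) is {a} or 0 when
   a is critical or upper regular. The faces s are added to the Morse sequence strictly before
   t, so induction along the sequence shows that kappa lies in ref(a) exactly when the number of
   paths is odd. Dually, cogradient paths are unwound from their last step, the recursion for
   the coreference map comes from coref(cobd s) = 0, and the induction runs backwards. *)

section \<open>Morse sequences\<close>

definition birth :: "'a step list \<Rightarrow> 'a set \<Rightarrow> nat" where
  "birth W x = (LEAST i. x \<in> stage W i)"

lemma stage_Suc: "i < length W \<Longrightarrow> stage W (Suc i) = stage W i \<union> added (W ! i)"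
  by (auto simp: stage_def take_Suc_conv_app_nth)

lemma stage_mono: "i \<le> j \<Longrightarrow> stage W i \<subseteq> stage W j"
  unfolding stage_def using set_take_subset_set_take by fastforce

lemma valid_step_stage: "valid_step Kp Kn s \<Longrightarrow> Kp = Kn - added s"
  by (cases s) auto

lemma valid_step_simplicial_complex: "valid_step Kp Kn s \<Longrightarrow> simplicial_complex Kn"
  by (cases s) auto

lemma morse_sequence_step:
  "morse_sequence_on W K \<Longrightarrow> i < length W \<Longrightarrow> valid_step (stage W i) (stage W (Suc i)) (W ! i)"
  by (simp add: morse_sequence_on_def)

lemma morse_sequence_stage_subset: "morse_sequence_on W K \<Longrightarrow> stage W i \<subseteq> K"
  unfolding morse_sequence_on_def stage_def by (auto dest: in_set_takeD)

lemma simplicial_complex_face: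
  "simplicial_complex K \<Longrightarrow> \<sigma> \<in> K \<Longrightarrow> \<tau> \<noteq> {} \<Longrightarrow> \<tau> \<subseteq> \<sigma> \<Longrightarrow> \<tau> \<in> K"
  unfolding simplicial_complex_def by blast

lemma simplicial_complex_simplex:
  "simplicial_complex K \<Longrightarrow> \<sigma> \<in> K \<Longrightarrow> finite \<sigma> \<and> \<sigma> \<noteq> {}"
  unfolding simplicial_complex_def by blast

lemma morse_sequence_simplicial_complex:
  assumes "morse_sequence_on W K"
  shows "simplicial_complex K"
proof (cases W rule: rev_cases)
  case Nil
  then show ?thesis using assms by (simp add: morse_sequence_on_def stage_def simplicial_complex_def)
next
  case (snoc V s)
  then show ?thesis
    using morse_sequence_step[OF assms, of "length V"] assms
    by (auto simp: morse_sequence_on_def dest: valid_step_simplicial_complex)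
qed

lemma card_simplex_neq_0: "morse_sequence_on W K \<Longrightarrow> a \<in> K \<Longrightarrow> card a \<noteq> 0"
  using simplicial_complex_simplex[OF morse_sequence_simplicial_complex] by fastforce

lemma finite_bd: "morse_sequence_on W K \<Longrightarrow> finite (bd K t)"
  using morse_sequence_simplicial_complex[of W K] by (simp add: simplicial_complex_def bd_def)

lemma finite_cobd: "morse_sequence_on W K \<Longrightarrow> finite (cobd K t)"
  using morse_sequence_simplicial_complex[of W K] by (simp add: simplicial_complex_def cobd_def)

lemma birth_added:
  assumes m: "morse_sequence_on W K" and i: "i < length W" and x: "x \<in> added (W ! i)"
  shows "birth W x = Suc i"
  unfolding birth_def
proof (rule Least_equality)
  show "x \<in> stage W (Suc i)" using stage_Suc[OF i] x by auto
  have "x \<notin> stage W i" using valid_step_stage[OF morse_sequence_step[OF m i]] x by auto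
  then show "Suc i \<le> j" if "x \<in> stage W j" for j
    using that stage_mono[of j i W] by (metis not_less_eq_eq subsetD)
qed

lemma added_step_unique:
  assumes m: "morse_sequence_on W K" and "u \<in> set W" "v \<in> set W" "x \<in> added u" "x \<in> added v"
  shows "u = v"
  using assms birth_added[OF m] by (metis in_set_conv_nth nat.inject)

lemma mem_added_step:
  assumes "morse_sequence_on W K" and "x \<in> K"
  shows "\<exists>i<length W. x \<in> added (W ! i)"
  using assms by (auto simp: morse_sequence_on_def stage_def in_set_conv_nth)

lemma mem_stage_iff_birth:
  assumes m: "morse_sequence_on W K" and x: "x \<in> K"
  shows "x \<in> stage W j \<longleftrightarrow> birth W x \<le> j"
proof -
  obtain i where i: "i < length W" "x \<in> added (W ! i)" using mem_added_step[OF m x] by blast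
  have "x \<in> stage W (birth W x)" "x \<notin> stage W i"
    using birth_added[OF m i] stage_Suc[OF i(1)] valid_step_stage[OF morse_sequence_step[OF m i(1)]] i(2)
    by auto
  then show ?thesis using birth_added[OF m i] stage_mono by (metis not_less_eq_eq subsetD)
qed

lemma birth_le_length: "morse_sequence_on W K \<Longrightarrow> x \<in> K \<Longrightarrow> birth W x \<le> length W"
  using mem_added_step birth_added by fastforce

lemma mem_critical_or_regular:
  assumes "morse_sequence_on W K" and "x \<in> K"
  shows "x \<in> critical W \<union> lower_regular W \<union> upper_regular W"
proof -
  obtain i where i: "i < length W" "x \<in> added (W ! i)" using mem_added_step[OF assms] by blast
  have "W ! i \<in> set W" using i(1) by simp
  with i(2) show ?thesis
    by (cases "W ! i") (auto simp: critical_def lower_regular_def upper_regular_def regular_pair_def)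
qed

lemma regular_pair_unique_upper:
  "morse_sequence_on W K \<Longrightarrow> regular_pair W s t \<Longrightarrow> regular_pair W s t' \<Longrightarrow> t = t'"
  using added_step_unique[of W K "Expand s t" "Expand s t'" s] by (simp add: regular_pair_def)

lemma regular_pair_unique_lower:
  "morse_sequence_on W K \<Longrightarrow> regular_pair W s t \<Longrightarrow> regular_pair W s' t \<Longrightarrow> s = s'"
  using added_step_unique[of W K "Expand s t" "Expand s' t" t] by (simp add: regular_pair_def)

lemma critical_not_lower_regular:
  "morse_sequence_on W K \<Longrightarrow> \<kappa> \<in> critical W \<Longrightarrow> \<kappa> \<notin> lower_regular W"
  using added_step_unique[of W K "Fill \<kappa>" _ \<kappa>]
  by (fastforce simp: critical_def lower_regular_def regular_pair_def)

lemma critical_not_upper_regular: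
  "morse_sequence_on W K \<Longrightarrow> \<kappa> \<in> critical W \<Longrightarrow> \<kappa> \<notin> upper_regular W"
  using added_step_unique[of W K "Fill \<kappa>" _ \<kappa>]
  by (fastforce simp: critical_def upper_regular_def regular_pair_def)

lemma regular_pair_step:
  assumes m: "morse_sequence_on W K" and rp: "regular_pair W s t"
  obtains i where "i < length W" "W ! i = Expand s t"
    "simplicial_complex (stage W (Suc i))" "free_pair (stage W (Suc i)) s t"
    "stage W i = stage W (Suc i) - {s, t}"
proof -
  obtain i where i: "i < length W" "W ! i = Expand s t"
    using rp by (auto simp: regular_pair_def in_set_conv_nth)
  then show ?thesis using that morse_sequence_step[OF m i(1)] by simp
qed

lemma regular_pair_mem:
  assumes m: "morse_sequence_on W K" and rp: "regular_pair W s t"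
  shows "s \<subset> t" "s \<in> K" "t \<in> K"
proof -
  obtain i where "free_pair (stage W (Suc i)) s t" using regular_pair_step[OF m rp] by metis
  then show "s \<subset> t" "s \<in> K" "t \<in> K"
    using morse_sequence_stage_subset[OF m] by (auto simp: free_pair_def)
qed

(* For a vertex v of t outside s, insert v s is a simplex containing s, so freeness forces it to be t. *)
lemma regular_pair_card:
  assumes m: "morse_sequence_on W K" and rp: "regular_pair W s t"
  shows "card t = Suc (card s)"
proof -
  obtain i where sc: "simplicial_complex (stage W (Suc i))" and fp: "free_pair (stage W (Suc i)) s t"
    using regular_pair_step[OF m rp] by metis
  then have t: "t \<in> stage W (Suc i)" and "s \<subset> t" by (auto simp: free_pair_def)
  then obtain v where v: "v \<in> t" "v \<notin> s" by blast
  have "finite s" using simplicial_complex_simplex[OF sc t] \<open>s \<subset> t\<close> finite_subset by auto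
  have "insert v s \<in> stage W (Suc i)"
    using simplicial_complex_face[OF sc t] v \<open>s \<subset> t\<close> by auto
  with fp v have "t = insert v s" by (auto simp: free_pair_def)
  with v \<open>finite s\<close> show ?thesis by simp
qed

lemma regular_pair_bd_cobd:
  assumes "morse_sequence_on W K" "regular_pair W s t"
  shows "s \<in> bd K t" "t \<in> cobd K s"
  using regular_pair_mem[OF assms] regular_pair_card[OF assms] by (auto simp: bd_def cobd_def)

lemma birth_regular_pair:
  assumes m: "morse_sequence_on W K" and rp: "regular_pair W s t"
  shows "birth W s = birth W t"
proof -
  obtain i where "i < length W" "W ! i = Expand s t" using regular_pair_step[OF m rp] by metis
  then show ?thesis using birth_added[OF m, of i] by simp
qed

(* Leaving a regular pair (s, t) through another face of t goes back in the sequence, through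
   another coface of s forward: this is what makes (co)gradient paths acyclic. *)
lemma birth_bd_less:
  assumes m: "morse_sequence_on W K" and rp: "regular_pair W s t"
    and r: "r \<in> bd K t" "r \<noteq> s"
  shows "birth W r < birth W t"
proof -
  obtain i where i: "i < length W" "W ! i = Expand s t"
    and sc: "simplicial_complex (stage W (Suc i))" and fp: "free_pair (stage W (Suc i)) s t"
    and prev: "stage W i = stage W (Suc i) - {s, t}"
    using regular_pair_step[OF m rp] by metis
  have "r \<in> K" "r \<subseteq> t" "r \<noteq> t" using r by (auto simp: bd_def)
  moreover have "r \<noteq> {}"
    using simplicial_complex_simplex[OF morse_sequence_simplicial_complex[OF m] \<open>r \<in> K\<close>] by blast
  moreover have "t \<in> stage W (Suc i)" using fp by (simp add: free_pair_def)
  ultimately have "r \<in> stage W (Suc i)" using simplicial_complex_face[OF sc] by blast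
  with prev \<open>r \<noteq> t\<close> r(2) have "r \<in> stage W i" by blast
  then show ?thesis using mem_stage_iff_birth[OF m \<open>r \<in> K\<close>] birth_added[OF m i(1)] i(2) by simp
qed

lemma birth_cobd_greater:
  assumes m: "morse_sequence_on W K" and rp: "regular_pair W s t"
    and r: "r \<in> cobd K s" "r \<noteq> t"
  shows "birth W s < birth W r"
proof (rule ccontr)
  obtain i where i: "i < length W" "W ! i = Expand s t" and fp: "free_pair (stage W (Suc i)) s t"
    using regular_pair_step[OF m rp] by metis
  assume "\<not> ?thesis"
  then have "r \<in> stage W (Suc i)"
    using mem_stage_iff_birth[OF m] birth_added[OF m i(1)] i(2) r(1) by (auto simp: cobd_def)
  with fp r show False by (auto simp: free_pair_def cobd_def)
qed

section \<open>Counting modulo 2\<close>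

lemma odd_card_filter_remove_iff:
  assumes "finite B" "a \<in> B" "even (card {x \<in> B. P x})"
  shows "P a \<longleftrightarrow> odd (card {x \<in> B - {a}. P x})"
proof -
  have "{x \<in> B. P x} = (if P a then insert a {x \<in> B - {a}. P x} else {x \<in> B - {a}. P x})"
    using assms(2) by auto
  with assms show ?thesis by (cases "P a") auto
qed

lemma card_UN_inj_image_disjoint:
  assumes "finite I" "\<forall>i\<in>I. finite (A i)" "\<forall>i\<in>I. \<forall>j\<in>I. i \<noteq> j \<longrightarrow> A i \<inter> A j = {}"
    and "inj g"
  shows "card (\<Union>i\<in>I. g ` A i) = (\<Sum>i\<in>I. card (A i))"
proof -
  have "card (\<Union>i\<in>I. g ` A i) = (\<Sum>i\<in>I. card (g ` A i))"
    using assms by (intro card_UN_disjoint) (auto simp: image_Int[symmetric])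
  also have "\<dots> = (\<Sum>i\<in>I. card (A i))"
    using assms(4) by (simp add: card_image inj_on_subset)
  finally show ?thesis .
qed

lemma odd_card_by_recursion:
  fixes rk :: "'b \<Rightarrow> nat" and P :: "'b \<Rightarrow> bool" and C :: "'b \<Rightarrow> 'c set"
  assumes disjoint: "\<And>y y'. y \<noteq> y' \<Longrightarrow> C y \<inter> C y' = {}"
    and rec: "\<And>x. x \<in> D \<Longrightarrow> (finite (C x) \<and> (P x \<longleftrightarrow> odd (card (C x)))) \<or>
      (\<exists>Y g. finite Y \<and> Y \<subseteq> D \<and> (\<forall>y\<in>Y. rk y < rk x) \<and> inj g \<and>
         C x = (\<Union>y\<in>Y. g ` C y) \<and> (P x \<longleftrightarrow> odd (card {y \<in> Y. P y})))"
    and "x \<in> D"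
  shows "P x \<longleftrightarrow> odd (card (C x))"
proof -
  have "finite (C x) \<and> (P x \<longleftrightarrow> odd (card (C x)))"
    using \<open>x \<in> D\<close>
  proof (induction "rk x" arbitrary: x rule: less_induct)
    case less
    from rec[OF less.prems] show ?case
    proof (elim disjE exE conjE)
      fix Y g
      assume Y: "finite Y" "Y \<subseteq> D" "\<forall>y\<in>Y. rk y < rk x" and "inj g"
        and Cx: "C x = (\<Union>y\<in>Y. g ` C y)" and Px: "P x \<longleftrightarrow> odd (card {y \<in> Y. P y})"
      have IH: "finite (C y) \<and> (P y \<longleftrightarrow> odd (card (C y)))" if "y \<in> Y" for y
        using less.hyps Y that by blast
      have "card (C x) = (\<Sum>y\<in>Y. card (C y))"
        unfolding Cx using Y(1) IH disjoint \<open>inj g\<close> by (intro card_UN_inj_image_disjoint) auto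
      moreover have "{y \<in> Y. P y} = {y \<in> Y. odd (card (C y))}" using IH by blast
      ultimately have "P x \<longleftrightarrow> odd (card (C x))"
        using Px even_sum_iff[OF Y(1), of "\<lambda>y. card (C y)"] by simp
      moreover have "finite (C x)" unfolding Cx using Y(1) IH by blast
      ultimately show ?thesis by blast
    qed simp
  qed
  then show ?thesis by blast
qed

section \<open>Gradient and cogradient paths\<close>

lemma all_less_Suc_first: "(\<forall>i<Suc n. P i) \<longleftrightarrow> P 0 \<and> (\<forall>i<n. P (Suc i))"
  by (auto simp: less_Suc_eq_0_disj)

lemma all_le_Suc_first: "(\<forall>i\<le>Suc n. P i) \<longleftrightarrow> P 0 \<and> (\<forall>i\<le>n. P (Suc i))"
  by (metis Suc_le_mono le0 not0_implies_Suc)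

lemma all_less_Suc_last: "(\<forall>i<Suc n. P i) \<longleftrightarrow> (\<forall>i<n. P i) \<and> P n"
  by (auto simp: less_Suc_eq)

lemma all_le_Suc_last: "(\<forall>i\<le>Suc n. P i) \<longleftrightarrow> (\<forall>i\<le>n. P i) \<and> P (Suc n)"
  by (auto simp: le_Suc_eq)

(* The dimension p in the definitions of (co)gradient paths is card a - 1, so it can be eliminated. *)
lemma mem_gradient_paths_iff:
  "(ss, ts) \<in> gradient_paths W K a b \<longleftrightarrow>
     length ss = length ts + 1 \<and> ss ! 0 = a \<and> ss ! length ts = b \<and> card a \<noteq> 0 \<and>
     (\<forall>i \<le> length ts. ss ! i \<in> K \<and> card (ss ! i) = card a) \<and>
     (\<forall>i < length ts. ts ! i \<in> K \<and> card (ts ! i) = Suc (card a) \<and>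
        regular_pair W (ss ! i) (ts ! i) \<and> ss ! Suc i \<in> bd K (ts ! i) \<and> ss ! Suc i \<noteq> ss ! i)"
  (is "?L \<longleftrightarrow> ?R")
proof
  assume ?L
  then obtain p where p: "length ss = length ts + 1" "ss ! 0 = a" "ss ! length ts = b"
     "\<forall>i \<le> length ts. ss ! i \<in> K \<and> card (ss ! i) = p + 1"
     "\<forall>i < length ts. ts ! i \<in> K \<and> card (ts ! i) = p + 2 \<and>
        regular_pair W (ss ! i) (ts ! i) \<and> ss ! Suc i \<in> bd K (ts ! i) \<and> ss ! Suc i \<noteq> ss ! i"
    unfolding gradient_paths_def by blast
  moreover have "card a = p + 1" using p(2) spec[OF p(4), of 0] by simp
  ultimately show ?R by simp
next
  assume ?R
  then show ?L
    unfolding gradient_paths_def by (intro CollectI case_prodI exI[of _ "card a - 1"]) simp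
qed

lemma gradient_paths_Nil:
  "(ss, []) \<in> gradient_paths W K a b \<longleftrightarrow> ss = [a] \<and> a = b \<and> a \<in> K \<and> card a \<noteq> 0"
  by (cases ss) (auto simp: mem_gradient_paths_iff)

lemma gradient_paths_Cons:
  assumes m: "morse_sequence_on W K"
  shows "(ss, t # ts) \<in> gradient_paths W K a b \<longleftrightarrow>
    (\<exists>s ss'. ss = a # ss' \<and> regular_pair W a t \<and> s \<in> bd K t \<and> s \<noteq> a \<and>
       (ss', ts) \<in> gradient_paths W K s b)"
proof (cases ss)
  case Nil
  then show ?thesis by (simp add: mem_gradient_paths_iff)
next
  case (Cons x ss')
  have start: "(\<exists>s. regular_pair W a t \<and> s \<in> bd K t \<and> s \<noteq> a \<and> (ss', ts) \<in> gradient_paths W K s b)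
    \<longleftrightarrow> regular_pair W a t \<and> ss' ! 0 \<in> bd K t \<and> ss' ! 0 \<noteq> a \<and>
      (ss', ts) \<in> gradient_paths W K (ss' ! 0) b"
    by (auto simp: mem_gradient_paths_iff)
  show ?thesis
  proof (cases "regular_pair W a t \<and> ss' ! 0 \<in> bd K t")
    case True
    then have "card (ss' ! 0) = card a" "a \<in> K" "t \<in> K" "card t = Suc (card a)"
      using regular_pair_card[OF m] regular_pair_mem(2,3)[OF m] by (auto simp: bd_def)
    with True Cons start show ?thesis
      by (auto simp: mem_gradient_paths_iff all_less_Suc_first all_le_Suc_first)
  next
    case False
    with Cons start show ?thesis
      by (auto simp: mem_gradient_paths_iff all_less_Suc_first all_le_Suc_first)
  qed
qed

lemma gradient_paths_disjoint:
  "a \<noteq> a' \<Longrightarrow> gradient_paths W K a b \<inter> gradient_paths W K a' b = {}"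
  unfolding gradient_paths_def by blast

lemma gradient_paths_not_lower_regular:
  assumes m: "morse_sequence_on W K" and a: "a \<in> K" "a \<notin> lower_regular W"
  shows "gradient_paths W K a b = (if a = b then {([a], [])} else {})"
proof -
  have "(ss, ts) \<in> gradient_paths W K a b \<longleftrightarrow> ts = [] \<and> ss = [a] \<and> a = b" for ss ts
  proof (cases ts)
    case Nil
    then show ?thesis using card_simplex_neq_0[OF m a(1)] a(1) by (auto simp: gradient_paths_Nil)
  next
    case Cons
    then show ?thesis using a(2) by (simp add: gradient_paths_Cons[OF m] lower_regular_def)
  qed
  then show ?thesis by (auto simp: set_eq_iff)
qed

lemma gradient_paths_lower_regular:
  assumes m: "morse_sequence_on W K" and rp: "regular_pair W a t" and "a \<noteq> b"
  shows "gradient_paths W K a b =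
    (\<Union>s \<in> bd K t - {a}. (\<lambda>(ss, ts). (a # ss, t # ts)) ` gradient_paths W K s b)"
proof -
  have "(ss, ts) \<in> gradient_paths W K a b \<longleftrightarrow>
    (\<exists>s \<in> bd K t - {a}. \<exists>ss' ts'. ss = a # ss' \<and> ts = t # ts' \<and> (ss', ts') \<in> gradient_paths W K s b)"
    for ss ts
  proof (cases ts)
    case Nil
    then show ?thesis using \<open>a \<noteq> b\<close> by (simp add: gradient_paths_Nil)
  next
    case (Cons t' ts')
    have "regular_pair W a t' \<longleftrightarrow> t' = t" using rp regular_pair_unique_upper[OF m rp] by blast
    with Cons show ?thesis by (simp add: gradient_paths_Cons[OF m]) blast
  qed
  then show ?thesis by (intro set_eqI) (force simp: image_iff)
qed

lemma mem_cogradient_paths_iff: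
  "(ts, ss) \<in> cogradient_paths W K a b \<longleftrightarrow>
     length ts = length ss + 1 \<and> ts ! 0 = a \<and> ts ! length ss = b \<and> card a \<noteq> 0 \<and>
     (\<forall>i \<le> length ss. ts ! i \<in> K \<and> card (ts ! i) = card a) \<and>
     (\<forall>i < length ss. ss ! i \<in> K \<and> Suc (card (ss ! i)) = card a \<and>
        regular_pair W (ss ! i) (ts ! Suc i) \<and> ts ! i \<in> cobd K (ss ! i) \<and> ts ! Suc i \<noteq> ts ! i)"
  (is "?L \<longleftrightarrow> ?R")
proof
  assume ?L
  then obtain p where p: "length ts = length ss + 1" "ts ! 0 = a" "ts ! length ss = b"
     "\<forall>i \<le> length ss. ts ! i \<in> K \<and> card (ts ! i) = p + 1"
     "\<forall>i < length ss. ss ! i \<in> K \<and> card (ss ! i) + 1 = p + 1 \<and>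
        regular_pair W (ss ! i) (ts ! Suc i) \<and> ts ! i \<in> cobd K (ss ! i) \<and> ts ! Suc i \<noteq> ts ! i"
    unfolding cogradient_paths_def by blast
  moreover have "card a = p + 1" using p(2) spec[OF p(4), of 0] by simp
  ultimately show ?R by simp
next
  assume ?R
  then show ?L
    unfolding cogradient_paths_def by (intro CollectI case_prodI exI[of _ "card a - 1"]) simp
qed

lemma cogradient_paths_Nil:
  "(ts, []) \<in> cogradient_paths W K a b \<longleftrightarrow> ts = [a] \<and> a = b \<and> a \<in> K \<and> card a \<noteq> 0"
  by (cases ts) (auto simp: mem_cogradient_paths_iff)

lemma cogradient_paths_snoc:
  assumes m: "morse_sequence_on W K"
  shows "(ts, ss @ [s]) \<in> cogradient_paths W K a b \<longleftrightarrow>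
    (\<exists>t ts'. ts = ts' @ [b] \<and> regular_pair W s b \<and> t \<in> cobd K s \<and> t \<noteq> b \<and>
       (ts', ss) \<in> cogradient_paths W K a t)"
proof (cases ts rule: rev_cases)
  case Nil
  then show ?thesis by (simp add: mem_cogradient_paths_iff)
next
  case (snoc ts' x)
  have finish: "(\<exists>t. regular_pair W s b \<and> t \<in> cobd K s \<and> t \<noteq> b \<and> (ts', ss) \<in> cogradient_paths W K a t)
    \<longleftrightarrow> regular_pair W s b \<and> ts' ! length ss \<in> cobd K s \<and> ts' ! length ss \<noteq> b \<and>
      (ts', ss) \<in> cogradient_paths W K a (ts' ! length ss)"
    by (auto simp: mem_cogradient_paths_iff)
  show ?thesis
  proof (cases "regular_pair W s b \<and> ts' ! length ss \<in> cobd K s \<and> length ts' = Suc (length ss)")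
    case True
    then have "Suc (card s) = card (ts' ! length ss)" "card b = Suc (card s)" "s \<in> K" "b \<in> K"
      using regular_pair_card[OF m] regular_pair_mem(2,3)[OF m] by (auto simp: cobd_def)
    with True snoc finish show ?thesis
      by (auto simp: mem_cogradient_paths_iff all_less_Suc_last all_le_Suc_last nth_append cong: conj_cong)
  next
    case False
    with snoc finish show ?thesis
      by (cases "length ts' = Suc (length ss)")
        (auto simp: mem_cogradient_paths_iff all_less_Suc_last all_le_Suc_last nth_append)
  qed
qed

lemma cogradient_paths_disjoint:
  "b \<noteq> b' \<Longrightarrow> cogradient_paths W K a b \<inter> cogradient_paths W K a b' = {}"
  unfolding cogradient_paths_def by blast

lemma cogradient_paths_not_upper_regular:
  assumes m: "morse_sequence_on W K" and b: "b \<in> K" "b \<notin> upper_regular W"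
  shows "cogradient_paths W K a b = (if a = b then {([b], [])} else {})"
proof -
  have "(ts, ss) \<in> cogradient_paths W K a b \<longleftrightarrow> ss = [] \<and> ts = [b] \<and> a = b" for ts ss
  proof (cases ss rule: rev_cases)
    case Nil
    then show ?thesis using card_simplex_neq_0[OF m b(1)] b(1) by (auto simp: cogradient_paths_Nil)
  next
    case snoc
    then show ?thesis using b(2) by (simp add: cogradient_paths_snoc[OF m] upper_regular_def)
  qed
  then show ?thesis by (auto simp: set_eq_iff)
qed

lemma cogradient_paths_upper_regular:
  assumes m: "morse_sequence_on W K" and rp: "regular_pair W s b" and "a \<noteq> b"
  shows "cogradient_paths W K a b =
    (\<Union>t \<in> cobd K s - {b}. (\<lambda>(ts, ss). (ts @ [b], ss @ [s])) ` cogradient_paths W K a t)"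
proof -
  have "(ts, ss) \<in> cogradient_paths W K a b \<longleftrightarrow>
    (\<exists>t \<in> cobd K s - {b}. \<exists>ts' ss'. ts = ts' @ [b] \<and> ss = ss' @ [s] \<and> (ts', ss') \<in> cogradient_paths W K a t)"
    for ts ss
  proof (cases ss rule: rev_cases)
    case Nil
    then show ?thesis using \<open>a \<noteq> b\<close> by (simp add: cogradient_paths_Nil)
  next
    case (snoc ss' s')
    have "regular_pair W s' b \<longleftrightarrow> s' = s" using rp regular_pair_unique_lower[OF m rp] by blast
    with snoc show ?thesis by (simp add: cogradient_paths_snoc[OF m]) blast
  qed
  then show ?thesis by (intro set_eqI) (force simp: image_iff)
qed

section \<open>Reference and coreference maps\<close>

lemma reference_map_not_lower_regular:
  assumes m: "morse_sequence_on W K" and ref: "is_reference_map W K ref"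
    and \<kappa>: "\<kappa> \<in> critical W" and a: "a \<in> K" "a \<notin> lower_regular W"
  shows "\<kappa> \<in> ref a \<longleftrightarrow> a = \<kappa>"
proof (cases "a \<in> critical W")
  case True
  with ref show ?thesis by (auto simp: is_reference_map_def)
next
  case False
  with mem_critical_or_regular[OF m a(1)] a(2) have "a \<in> upper_regular W" by blast
  with ref critical_not_upper_regular[OF m \<kappa>] show ?thesis by (auto simp: is_reference_map_def)
qed

lemma reference_map_lower_regular:
  assumes m: "morse_sequence_on W K" and ref: "is_reference_map W K ref"
    and rp: "regular_pair W a t"
  shows "\<kappa> \<in> ref a \<longleftrightarrow> odd (card {s \<in> bd K t - {a}. \<kappa> \<in> ref s})"
proof (rule odd_card_filter_remove_iff)
  have "t \<in> upper_regular W" using rp by (auto simp: upper_regular_def)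
  with ref show "even (card {s \<in> bd K t. \<kappa> \<in> ref s})" by (auto simp: is_reference_map_def lin_def)
qed (use finite_bd[OF m] regular_pair_bd_cobd[OF m rp] in auto)

lemma coreference_map_not_upper_regular:
  assumes m: "morse_sequence_on W K" and coref: "is_coreference_map W K coref"
    and \<kappa>: "\<kappa> \<in> critical W" and b: "b \<in> K" "b \<notin> upper_regular W"
  shows "\<kappa> \<in> coref b \<longleftrightarrow> b = \<kappa>"
proof (cases "b \<in> critical W")
  case True
  with coref show ?thesis by (auto simp: is_coreference_map_def)
next
  case False
  with mem_critical_or_regular[OF m b(1)] b(2) have "b \<in> lower_regular W" by blast
  with coref critical_not_lower_regular[OF m \<kappa>] show ?thesis by (auto simp: is_coreference_map_def)
qed

lemma coreference_map_upper_regular: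
  assumes m: "morse_sequence_on W K" and coref: "is_coreference_map W K coref"
    and rp: "regular_pair W s b"
  shows "\<kappa> \<in> coref b \<longleftrightarrow> odd (card {t \<in> cobd K s - {b}. \<kappa> \<in> coref t})"
proof (rule odd_card_filter_remove_iff)
  have "s \<in> lower_regular W" using rp by (auto simp: lower_regular_def)
  with coref show "even (card {t \<in> cobd K s. \<kappa> \<in> coref t})" by (auto simp: is_coreference_map_def lin_def)
qed (use finite_cobd[OF m] regular_pair_bd_cobd[OF m rp] in auto)

theorem reference_map_iff_odd_gradient_paths:
  assumes m: "morse_sequence_on W K" and ref: "is_reference_map W K ref"
    and \<kappa>: "\<kappa> \<in> critical W" and "\<nu> \<in> K"
  shows "\<kappa> \<in> ref \<nu> \<longleftrightarrow> odd (card (gradient_paths W K \<nu> \<kappa>))"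
proof (rule odd_card_by_recursion[where rk = "birth W" and D = K
    and P = "\<lambda>a. \<kappa> \<in> ref a" and C = "\<lambda>a. gradient_paths W K a \<kappa>"])
  fix a assume a: "a \<in> K"
  consider "a \<notin> lower_regular W" | t where "regular_pair W a t" by (auto simp: lower_regular_def)
  then show "(finite (gradient_paths W K a \<kappa>) \<and> (\<kappa> \<in> ref a \<longleftrightarrow> odd (card (gradient_paths W K a \<kappa>)))) \<or>
    (\<exists>Y g. finite Y \<and> Y \<subseteq> K \<and> (\<forall>y\<in>Y. birth W y < birth W a) \<and> inj g \<and>
       gradient_paths W K a \<kappa> = (\<Union>y\<in>Y. g ` gradient_paths W K y \<kappa>) \<and>
       (\<kappa> \<in> ref a \<longleftrightarrow> odd (card {y \<in> Y. \<kappa> \<in> ref y})))"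
  proof cases
    case 1
    then show ?thesis
      using a gradient_paths_not_lower_regular[OF m] reference_map_not_lower_regular[OF m ref \<kappa>] by simp
  next
    case (2 t)
    then have "a \<noteq> \<kappa>" using critical_not_lower_regular[OF m \<kappa>] by (auto simp: lower_regular_def)
    show ?thesis
    proof (intro disjI2 exI conjI)
      show "finite (bd K t - {a})" "bd K t - {a} \<subseteq> K" using finite_bd[OF m] by (auto simp: bd_def)
      show "\<forall>y \<in> bd K t - {a}. birth W y < birth W a"
        using birth_bd_less[OF m 2] birth_regular_pair[OF m 2] by simp
      show "inj (\<lambda>(ss, ts). (a # ss, t # ts))" by (auto simp: inj_def)
      show "gradient_paths W K a \<kappa> =
          (\<Union>y \<in> bd K t - {a}. (\<lambda>(ss, ts). (a # ss, t # ts)) ` gradient_paths W K y \<kappa>)"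
        using gradient_paths_lower_regular[OF m 2 \<open>a \<noteq> \<kappa>\<close>] .
      show "\<kappa> \<in> ref a \<longleftrightarrow> odd (card {y \<in> bd K t - {a}. \<kappa> \<in> ref y})"
        using reference_map_lower_regular[OF m ref 2] .
    qed
  qed
qed (simp_all add: gradient_paths_disjoint \<open>\<nu> \<in> K\<close>)

theorem coreference_map_iff_odd_cogradient_paths:
  assumes m: "morse_sequence_on W K" and coref: "is_coreference_map W K coref"
    and \<kappa>: "\<kappa> \<in> critical W" and "\<nu> \<in> K"
  shows "\<kappa> \<in> coref \<nu> \<longleftrightarrow> odd (card (cogradient_paths W K \<kappa> \<nu>))"
proof (rule odd_card_by_recursion[where rk = "\<lambda>b. length W - birth W b" and D = K
    and P = "\<lambda>b. \<kappa> \<in> coref b" and C = "\<lambda>b. cogradient_paths W K \<kappa> b"])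
  fix b assume b: "b \<in> K"
  consider "b \<notin> upper_regular W" | s where "regular_pair W s b" by (auto simp: upper_regular_def)
  then show "(finite (cogradient_paths W K \<kappa> b) \<and> (\<kappa> \<in> coref b \<longleftrightarrow> odd (card (cogradient_paths W K \<kappa> b)))) \<or>
    (\<exists>Y g. finite Y \<and> Y \<subseteq> K \<and> (\<forall>y\<in>Y. length W - birth W y < length W - birth W b) \<and> inj g \<and>
       cogradient_paths W K \<kappa> b = (\<Union>y\<in>Y. g ` cogradient_paths W K \<kappa> y) \<and>
       (\<kappa> \<in> coref b \<longleftrightarrow> odd (card {y \<in> Y. \<kappa> \<in> coref y})))"
  proof cases
    case 1
    then show ?thesis
      using b cogradient_paths_not_upper_regular[OF m] coreference_map_not_upper_regular[OF m coref \<kappa>]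
      by simp
  next
    case (2 s)
    then have "\<kappa> \<noteq> b" using critical_not_upper_regular[OF m \<kappa>] by (auto simp: upper_regular_def)
    show ?thesis
    proof (intro disjI2 exI conjI)
      show "finite (cobd K s - {b})" "cobd K s - {b} \<subseteq> K" using finite_cobd[OF m] by (auto simp: cobd_def)
      show "\<forall>y \<in> cobd K s - {b}. length W - birth W y < length W - birth W b"
      proof
        fix y assume y: "y \<in> cobd K s - {b}"
        then have "birth W b < birth W y" "birth W y \<le> length W"
          using birth_cobd_greater[OF m 2] birth_regular_pair[OF m 2] birth_le_length[OF m]
          by (auto simp: cobd_def)
        then show "length W - birth W y < length W - birth W b" by simp
      qed
      show "inj (\<lambda>(ts, ss). (ts @ [b], ss @ [s]))" by (auto simp: inj_def)
      show "cogradient_paths W K \<kappa> b =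
          (\<Union>y \<in> cobd K s - {b}. (\<lambda>(ts, ss). (ts @ [b], ss @ [s])) ` cogradient_paths W K \<kappa> y)"
        using cogradient_paths_upper_regular[OF m 2 \<open>\<kappa> \<noteq> b\<close>] .
      show "\<kappa> \<in> coref b \<longleftrightarrow> odd (card {y \<in> cobd K s - {b}. \<kappa> \<in> coref y})"
        using coreference_map_upper_regular[OF m coref 2] .
    qed
  qed
qed (simp_all add: cogradient_paths_disjoint \<open>\<nu> \<in> K\<close>)

theorem theorem2:
  fixes W :: "'a step list" and K :: "'a set set"
    and ref coref :: "'a set \<Rightarrow> 'a set set" and \<kappa> \<nu> :: "'a set"
  assumes "morse_sequence_on W K"
    and "is_reference_map W K ref"
    and "is_coreference_map W K coref"
    and "\<kappa> \<in> critical W"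
    and "\<nu> \<in> K"
  shows "(\<kappa> \<in> ref \<nu> \<longleftrightarrow> odd (card (gradient_paths W K \<nu> \<kappa>))) \<and>
         (\<kappa> \<in> coref \<nu> \<longleftrightarrow> odd (card (cogradient_paths W K \<kappa> \<nu>)))"
  using reference_map_iff_odd_gradient_paths[OF assms(1,2,4,5)]
    coreference_map_iff_odd_cogradient_paths[OF assms(1,3,4,5)]
  by blast

end
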